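(* Let $\sigma$ be a signature, $\Delta$ a set of $\mathcal{CO}[\sigma]$-formulas, and $\varphi,\psi$ arbitrary formulas over $\sigma$ (of $\mathcal{CO}_{\sqcup}[\sigma]$ or $\mathcal{COD}[\sigma]$). If $\Delta\models^g\varphi\sqcup\psi$, then $\Delta\models^g\varphi$ or $\Delta\models^g\psi$. In particular, if $\models^g\varphi\sqcup\psi$, then $\models^g\varphi$ or $\models^g\psi$.
   Context: A signature $\sigma=(\mathrm{Dom},\mathrm{Ran})$: $\mathrm{Dom}$ nonempty finite set of variables, each with nonempty finite range $\mathrm{Ran}(X)$; $\mathbf X=\mathbf x$ abbreviates $X_1=x_1\wedge\dots\wedge X_n=x_n$ ($\mathbf x\in\prod\mathrm{Ran}(X_i)$), inconsistent if it contains $X=x,X=x'$ with $x\ne x'$. Languages: $\mathcal{CO}[\sigma]$: $\alpha::=X=x\mid\neg\alpha\mid\alpha\wedge\alpha\mid\alpha\vee\alpha\mid\mathbf X=\mathbf x\;\Box\!\!\rightarrow\alpha$; $\mathcal{CO}_{\sqcup}[\sigma]$: $\varphi::=X=x\mid\neg\alpha\mid\varphi\wedge\varphi\mid\varphi\vee\varphi\mid\varphi\sqcup\varphi\mid\mathbf X=\mathbf x\;\Box\!\!\rightarrow\varphi$; $\mathcal{COD}[\sigma]$: $\varphi::=X=x\mid{=}(\mathbf X;Y)\mid\neg\alpha\mid\varphi\wedge\varphi\mid\varphi\vee\varphi\mid\mathbf X=\mathbf x\;\Box\!\!\rightarrow\varphi$ ($\alpha\in\mathcal{CO}[\sigma]$).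 Systems of functions $\mathcal F$: for each $V\in\mathrm{En}(\mathcal F)\subseteq\mathrm{Dom}$ parents $PA^{\mathcal F}_V\subseteq\mathrm{Dom}\setminus\{V\}$ and $\mathcal F_V:\mathrm{Ran}(PA^{\mathcal F}_V)\to\mathrm{Ran}(V)$; $\mathrm{Ex}(\mathcal F)=\mathrm{Dom}\setminus\mathrm{En}(\mathcal F)$; only recursive systems (acyclic parent graph), forming $\mathbb F_\sigma$. An assignment $s$ ($s(X)\in\mathrm{Ran}(X)$) is compatible with $\mathcal F$ if $s(V)=\mathcal F_V(s(PA^{\mathcal F}_V))$ for $V\in\mathrm{En}(\mathcal F)$. A generalized causal team over $\sigma$ is a set $T$ of compatible pairs $(s,\mathcal F)$ with $\mathcal F\in\mathbb F_\sigma$; $T^-=\{s:(s,\mathcal F)\in T\}$. For consistent $\mathbf X=\mathbf x$: $\mathcal F_{\mathbf X=\mathbf x}$ restricts $\mathcal F$ to $\mathrm{En}(\mathcal F)\setminus\mathbf X$; $s^{\mathcal F}_{\mathbf X=\mathbf x}$: $X_i\mapsto x_i$, $V\mapsto s(V)$ on $\mathrm{Ex}(\mathcal F)\setminus\mathbf X$, $V\mapsto\mathcal F_V(s^{\mathcal F}_{\mathbf X=\mathbf x}(PA^{\mathcal F}_V))$ on $\mathrm{En}(\mathcal F)\setminus\mathbf X$; $T_{\mathbf X=\mathbf x}=\{(s^{\mathcal F}_{\mathbf X=\mathbf x},\mathcal F_{\mathbf X=\mathbf x}):(s,\mathcal F)\in T\}$. $\models^g$: $T\models X=x$ iff $s(X)=x$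 for all $s\in T^-$; $T\models{=}(\mathbf X;Y)$ iff for all $s,s'\in T^-$, $s(\mathbf X)=s'(\mathbf X)$ implies $s(Y)=s'(Y)$; $T\models\neg\alpha$ iff $\{(s,\mathcal F)\}\not\models\alpha$ for all $(s,\mathcal F)\in T$; $\wedge$ classical; $T\models\varphi\vee\psi$ iff $T=T_1\cup T_2$ with $T_1\models\varphi$, $T_2\models\psi$; $T\models\varphi\sqcup\psi$ iff $T\models\varphi$ or $T\models\psi$; $T\models\mathbf X=\mathbf x\;\Box\!\!\rightarrow\varphi$ iff $\mathbf X=\mathbf x$ inconsistent or $T_{\mathbf X=\mathbf x}\models\varphi$. $\Delta\models^g\varphi$: every generalized causal team over $\sigma$ satisfying all of $\Delta$ satisfies $\varphi$. *)

theory Defs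
  imports "HOL-Library.FuncSet"
begin

text \<open>A signature is given by a set Dom of variables and a range function Ran.
  Values of all variables live in one HOL type 'a; Ran X is the range of X.\<close>

definition signature :: "'v set \<Rightarrow> ('v \<Rightarrow> 'a set) \<Rightarrow> bool" where
  "signature Dom Ran \<longleftrightarrow> finite Dom \<and> Dom \<noteq> {} \<and>
     (\<forall>X\<in>Dom. finite (Ran X) \<and> Ran X \<noteq> {})"

definition assignment :: "'v set \<Rightarrow> ('v \<Rightarrow> 'a set) \<Rightarrow> ('v \<Rightarrow> 'a) \<Rightarrow> bool" where
  "assignment Dom Ran s \<longleftrightarrow> s \<in> (\<Pi>\<^sub>E X\<in>Dom. Ran X)"

text \<open>One syntax tree containing all constructors; the languages CO, CO_sqcup, COD
  are carved out by predicates.  An antecedent X = x is a list of (variable, value) pairs.\<close>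

datatype ('v, 'a) form =
    Eq 'v 'a
  | Dep "'v list" 'v
  | Neg "('v, 'a) form"
  | Conj "('v, 'a) form" "('v, 'a) form"
  | Disj "('v, 'a) form" "('v, 'a) form"
  | Tor "('v, 'a) form" "('v, 'a) form"
  | Cf "('v \<times> 'a) list" "('v, 'a) form"

fun isCO :: "('v, 'a) form \<Rightarrow> bool" where
  "isCO (Eq X x) = True"
| "isCO (Dep Xs Y) = False"
| "isCO (Neg a) = isCO a"
| "isCO (Conj a b) = (isCO a \<and> isCO b)"
| "isCO (Disj a b) = (isCO a \<and> isCO b)"
| "isCO (Tor a b) = False"
| "isCO (Cf xs a) = isCO a"

fun isCOsq :: "('v, 'a) form \<Rightarrow> bool" where
  "isCOsq (Eq X x) = True"
| "isCOsq (Dep Xs Y) = False"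
| "isCOsq (Neg a) = isCO a"
| "isCOsq (Conj a b) = (isCOsq a \<and> isCOsq b)"
| "isCOsq (Disj a b) = (isCOsq a \<and> isCOsq b)"
| "isCOsq (Tor a b) = (isCOsq a \<and> isCOsq b)"
| "isCOsq (Cf xs a) = isCOsq a"

fun isCOD :: "('v, 'a) form \<Rightarrow> bool" where
  "isCOD (Eq X x) = True"
| "isCOD (Dep Xs Y) = True"
| "isCOD (Neg a) = isCO a"
| "isCOD (Conj a b) = (isCOD a \<and> isCOD b)"
| "isCOD (Disj a b) = (isCOD a \<and> isCOD b)"
| "isCOD (Tor a b) = False"
| "isCOD (Cf xs a) = isCOD a"

fun wf_form :: "'v set \<Rightarrow> ('v \<Rightarrow> 'a set) \<Rightarrow> ('v, 'a) form \<Rightarrow> bool" where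
  "wf_form Dom Ran (Eq X x) = (X \<in> Dom \<and> x \<in> Ran X)"
| "wf_form Dom Ran (Dep Xs Y) = (set Xs \<subseteq> Dom \<and> Y \<in> Dom)"
| "wf_form Dom Ran (Neg a) = wf_form Dom Ran a"
| "wf_form Dom Ran (Conj a b) = (wf_form Dom Ran a \<and> wf_form Dom Ran b)"
| "wf_form Dom Ran (Disj a b) = (wf_form Dom Ran a \<and> wf_form Dom Ran b)"
| "wf_form Dom Ran (Tor a b) = (wf_form Dom Ran a \<and> wf_form Dom Ran b)"
| "wf_form Dom Ran (Cf xs a) = ((\<forall>(X, x)\<in>set xs. X \<in> Dom \<and> x \<in> Ran X) \<and> wf_form Dom Ran a)"

definition consistent :: "('v \<times> 'a) list \<Rightarrow> bool" where
  "consistent xs \<longleftrightarrow> (\<forall>X x x'. (X, x) \<in> set xs \<longrightarrow> (X, x') \<in> set xs \<longrightarrow> x = x')"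

record ('v, 'a) sysf =
  en :: "'v set"
  pa :: "'v \<Rightarrow> 'v set"
  fn :: "'v \<Rightarrow> ('v \<Rightarrow> 'a) \<Rightarrow> 'a"

definition sysf_wf :: "'v set \<Rightarrow> ('v \<Rightarrow> 'a set) \<Rightarrow> ('v, 'a) sysf \<Rightarrow> bool" where
  "sysf_wf Dom Ran F \<longleftrightarrow> en F \<subseteq> Dom \<and>
     (\<forall>V\<in>en F. pa F V \<subseteq> Dom - {V} \<and>
        fn F V \<in> (\<Pi>\<^sub>E t\<in>(\<Pi>\<^sub>E W\<in>pa F V. Ran W). Ran V)) \<and>
     (\<forall>V. V \<notin> en F \<longrightarrow> pa F V = {} \<and> fn F V = (\<lambda>_. undefined))"

definition recursive :: "('v, 'a) sysf \<Rightarrow> bool" where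
  "recursive F \<longleftrightarrow> acyclic {(W, V). V \<in> en F \<and> W \<in> pa F V}"

definition Fsig :: "'v set \<Rightarrow> ('v \<Rightarrow> 'a set) \<Rightarrow> ('v, 'a) sysf set" where
  "Fsig Dom Ran = {F. sysf_wf Dom Ran F \<and> recursive F}"

definition compatible :: "('v \<Rightarrow> 'a) \<Rightarrow> ('v, 'a) sysf \<Rightarrow> bool" where
  "compatible s F \<longleftrightarrow> (\<forall>V\<in>en F. s V = fn F V (restrict s (pa F V)))"

definition gcteam :: "'v set \<Rightarrow> ('v \<Rightarrow> 'a set) \<Rightarrow> (('v \<Rightarrow> 'a) \<times> ('v, 'a) sysf) set \<Rightarrow> bool" where
  "gcteam Dom Ran T \<longleftrightarrow>
     (\<forall>(s, F)\<in>T. assignment Dom Ran s \<and> F \<in> Fsig Dom Ran \<and> compatible s F)"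

definition interv_sys :: "('v \<times> 'a) list \<Rightarrow> ('v, 'a) sysf \<Rightarrow> ('v, 'a) sysf" where
  "interv_sys xs F =
     (let E = en F - fst ` set xs in
      \<lparr>en = E, pa = (\<lambda>V. if V \<in> E then pa F V else {}),
       fn = (\<lambda>V. if V \<in> E then fn F V else (\<lambda>_. undefined))\<rparr>)"

text \<open>The intervened assignment, characterized by its (recursive) defining equations;
  for recursive F and consistent xs over Dom it is uniquely determined.\<close>

definition interv_asg :: "'v set \<Rightarrow> ('v \<times> 'a) list \<Rightarrow> ('v, 'a) sysf \<Rightarrow> ('v \<Rightarrow> 'a) \<Rightarrow> ('v \<Rightarrow> 'a)" where
  "interv_asg Dom xs F s = (THE s'.
      (\<forall>(X, x)\<in>set xs. s' X = x) \<and>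
      (\<forall>V\<in>Dom - en F - fst ` set xs. s' V = s V) \<and>
      (\<forall>V\<in>en F - fst ` set xs. s' V = fn F V (restrict s' (pa F V))) \<and>
      (\<forall>V. V \<notin> Dom \<longrightarrow> s' V = undefined))"

definition interv_team :: "'v set \<Rightarrow> ('v \<times> 'a) list \<Rightarrow> (('v \<Rightarrow> 'a) \<times> ('v, 'a) sysf) set
    \<Rightarrow> (('v \<Rightarrow> 'a) \<times> ('v, 'a) sysf) set" where
  "interv_team Dom xs T = (\<lambda>(s, F). (interv_asg Dom xs F s, interv_sys xs F)) ` T"

fun sat :: "'v set \<Rightarrow> (('v \<Rightarrow> 'a) \<times> ('v, 'a) sysf) set \<Rightarrow> ('v, 'a) form \<Rightarrow> bool" where
  "sat Dom T (Eq X x) = (\<forall>(s, F)\<in>T. s X = x)"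
| "sat Dom T (Dep Xs Y) = (\<forall>(s, F)\<in>T. \<forall>(s', F')\<in>T.
       (\<forall>X\<in>set Xs. s X = s' X) \<longrightarrow> s Y = s' Y)"
| "sat Dom T (Neg a) = (\<forall>p\<in>T. \<not> sat Dom {p} a)"
| "sat Dom T (Conj a b) = (sat Dom T a \<and> sat Dom T b)"
| "sat Dom T (Disj a b) = (\<exists>T1 T2. T = T1 \<union> T2 \<and> sat Dom T1 a \<and> sat Dom T2 b)"
| "sat Dom T (Tor a b) = (sat Dom T a \<or> sat Dom T b)"
| "sat Dom T (Cf xs a) = (\<not> consistent xs \<or> sat Dom (interv_team Dom xs T) a)"

definition gentails :: "'v set \<Rightarrow> ('v \<Rightarrow> 'a set) \<Rightarrow> ('v, 'a) form set \<Rightarrow> ('v, 'a) form \<Rightarrow> bool" where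
  "gentails Dom Ran \<Delta> \<phi> \<longleftrightarrow>
     (\<forall>T. gcteam Dom Ran T \<longrightarrow> (\<forall>\<delta>\<in>\<Delta>. sat Dom T \<delta>) \<longrightarrow> sat Dom T \<phi>)"

end

theory Submission
  imports Defs
begin

text \<open>Team satisfaction is downward closed for every formula, and for CO-formulas it is
  moreover flat: a team satisfies such a formula as soon as each of its singletons does.
  Hence CO-formulas are closed under unions of teams.  Given teams \<open>T\<^sub>1\<close>, \<open>T\<^sub>2\<close> satisfying
  \<open>\<Delta>\<close> but refuting \<open>\<phi>\<close> and \<open>\<psi>\<close> respectively, the team \<open>T\<^sub>1 \<union> T\<^sub>2\<close> still satisfies \<open>\<Delta>\<close>, so it
  satisfies \<open>\<phi>\<close> or \<open>\<psi>\<close>, and by downward closure so does \<open>T\<^sub>1\<close> or \<open>T\<^sub>2\<close>.\<close>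

lemma sat_empty_team: "sat Dom {} a"
  by (induction a) (auto simp: interv_team_def)

lemma sat_downward_closed: "S \<subseteq> T \<Longrightarrow> sat Dom T a \<Longrightarrow> sat Dom S a"
proof (induction a arbitrary: S T)
  case (Disj a b)
  then obtain T1 T2 where "T = T1 \<union> T2" "sat Dom T1 a" "sat Dom T2 b"
    by auto
  moreover have "S = (S \<inter> T1) \<union> (S \<inter> T2)"
    using Disj.prems(1) \<open>T = T1 \<union> T2\<close> by blast
  ultimately show ?case
    using Disj.IH[of "S \<inter> T1" T1] Disj.IH[of "S \<inter> T2" T2] by (metis inf_le2 sat.simps(5))
next
  case (Cf xs a)
  have "interv_team Dom xs S \<subseteq> interv_team Dom xs T"
    using Cf.prems(1) unfolding interv_team_def by (rule image_mono)
  with Cf show ?case by auto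
qed (simp; blast)+

lemma sat_singleton_Disj:
  "sat Dom {p} (Disj a b) \<longleftrightarrow> sat Dom {p} a \<or> sat Dom {p} b"
proof
  assume "sat Dom {p} (Disj a b)"
  then obtain T1 T2 where "{p} = T1 \<union> T2" "sat Dom T1 a" "sat Dom T2 b"
    by auto
  then have "T1 = {p} \<or> T2 = {p}"
    by blast
  with \<open>sat Dom T1 a\<close> \<open>sat Dom T2 b\<close> show "sat Dom {p} a \<or> sat Dom {p} b"
    by auto
next
  assume "sat Dom {p} a \<or> sat Dom {p} b"
  then show "sat Dom {p} (Disj a b)"
    using sat_empty_team by (metis Un_empty_left Un_empty_right sat.simps(5))
qed

lemma interv_team_singleton:
  "interv_team Dom xs {(s, F)} = {(interv_asg Dom xs F s, interv_sys xs F)}"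
  by (simp add: interv_team_def)

lemma sat_CO_of_singletons:
  assumes "isCO a" and "\<forall>p\<in>T. sat Dom {p} a"
  shows "sat Dom T a"
  using assms
proof (induction a arbitrary: T)
  case (Disj a b)
  let ?T1 = "{p\<in>T. sat Dom {p} a}" and ?T2 = "{p\<in>T. sat Dom {p} b}"
  have "T = ?T1 \<union> ?T2"
    using Disj.prems(2) unfolding sat_singleton_Disj by blast
  moreover have "sat Dom ?T1 a"
    using Disj.IH(1)[of ?T1] Disj.prems(1) by simp
  moreover have "sat Dom ?T2 b"
    using Disj.IH(2)[of ?T2] Disj.prems(1) by simp
  ultimately show ?case
    unfolding sat.simps by blast
next
  case (Cf xs a)
  have "sat Dom (interv_team Dom xs T) a" if "consistent xs"
  proof (rule Cf.IH)
    show "isCO a"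
      using Cf.prems(1) by simp
    show "\<forall>q\<in>interv_team Dom xs T. sat Dom {q} a"
      using Cf.prems(2) that unfolding interv_team_def by (force simp: interv_team_singleton)
  qed
  then show ?case
    by simp
next
  case (Eq X x)
  show ?case
    using Eq.prems(2) by fastforce
next
  case (Neg a)
  show ?case
    using Neg.prems(2) by simp
next
  case (Conj a b)
  show ?case
    using Conj.IH[of T] Conj.prems by simp
qed simp_all

lemma sat_CO_Un:
  assumes "isCO a" "sat Dom T1 a" "sat Dom T2 a"
  shows "sat Dom (T1 \<union> T2) a"
  using assms sat_downward_closed[of "{_}" T1 Dom a] sat_downward_closed[of "{_}" T2 Dom a]
  by (intro sat_CO_of_singletons) auto

lemma gcteam_Un: "gcteam Dom Ran T1 \<Longrightarrow> gcteam Dom Ran T2 \<Longrightarrow> gcteam Dom Ran (T1 \<union> T2)"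
  unfolding gcteam_def by blast

lemma gentails_Tor_disjunction_property:
  assumes "\<forall>\<delta>\<in>\<Delta>. isCO \<delta>" and "gentails Dom Ran \<Delta> (Tor \<phi> \<psi>)"
  shows "gentails Dom Ran \<Delta> \<phi> \<or> gentails Dom Ran \<Delta> \<psi>"
proof (rule ccontr)
  assume "\<not> ?thesis"
  then obtain T1 T2
    where T1: "gcteam Dom Ran T1" "\<forall>\<delta>\<in>\<Delta>. sat Dom T1 \<delta>" "\<not> sat Dom T1 \<phi>"
      and T2: "gcteam Dom Ran T2" "\<forall>\<delta>\<in>\<Delta>. sat Dom T2 \<delta>" "\<not> sat Dom T2 \<psi>"
    unfolding gentails_def by blast
  have "\<forall>\<delta>\<in>\<Delta>. sat Dom (T1 \<union> T2) \<delta>"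
    using assms(1) T1(2) T2(2) sat_CO_Un by blast
  with assms(2) T1(1) T2(1) have "sat Dom (T1 \<union> T2) \<phi> \<or> sat Dom (T1 \<union> T2) \<psi>"
    unfolding gentails_def using gcteam_Un by fastforce
  with T1(3) T2(3) show False
    using sat_downward_closed[of T1 "T1 \<union> T2"] sat_downward_closed[of T2 "T1 \<union> T2"] by blast
qed

theorem theorem3p8:
  fixes Dom :: "'v set" and Ran :: "'v \<Rightarrow> 'a set"
    and \<Delta> :: "('v, 'a) form set" and \<phi> \<psi> :: "('v, 'a) form"
  assumes "signature Dom Ran"
    and "\<forall>\<delta>\<in>\<Delta>. isCO \<delta> \<and> wf_form Dom Ran \<delta>"
    and "(isCOsq \<phi> \<or> isCOD \<phi>) \<and> wf_form Dom Ran \<phi>"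
    and "(isCOsq \<psi> \<or> isCOD \<psi>) \<and> wf_form Dom Ran \<psi>"
    and "gentails Dom Ran \<Delta> (Tor \<phi> \<psi>)"
  shows "gentails Dom Ran \<Delta> \<phi> \<or> gentails Dom Ran \<Delta> \<psi>"
  using assms(2,5) by (simp add: gentails_Tor_disjunction_property)

end
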